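(* For $k\in\mathbb N^+$, $\mu\in\mathbb R$, $s^2>0$, let $g(x;k,\mu,s^2)$ be the probability density proportional to $I(x\ge0)\,x^{2k}f(x;\mu,s^2)$, where $f(\cdot;\mu,s^2)$ is the $N(\mu,s^2)$ density. Let $\hat\mu=\arg\max_x g(x;k,\mu,s^2)$ and $\hat s^2=-\big(\partial^2\log g/\partial x^2|_{x=\hat\mu}\big)^{-1}$, and let $f(\cdot;\hat\mu,\hat s^2)$ be the Laplace approximation. For $m>0$ define $V(x;k,m)=2k\big[\log(x/m)-(x/m-1)+\tfrac12(x/m-1)^2\big]$ for $x>0$ and $V(x;k,m)=-\infty$ for $x\le0$. Then the total variation distance satisfies $$d_{TV}\big(g(\cdot;k,\mu,s^2),f(\cdot;\hat\mu,\hat s^2)\big)\le\max\Big(\int_1^{\infty}\big[e^{V(x;k,1)}-1\big]f(x;1,\tfrac1{2k})\,dx,\ \int_{-\infty}^{1}\big[1-e^{V(x;k,1)}\big]f(x;1,\tfrac1{2k})\,dx\Big),$$ a bound that does not depend on $\mu$ or $s^2$.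
   Context: Here $d_{TV}(p,q)=\int (p-q)^+\,dx$ for densities $p,q$. Explicitly, $\hat\mu=\frac{\mu/s^2+\sqrt{\mu^2/s^4+8k/s^2}}{2/s^2}$ and $\hat s^2=(2k/\hat\mu^2+1/s^2)^{-1}$. *)

theory Defs
  imports "HOL-Probability.Probability"
begin

definition gauss :: "real \<Rightarrow> real \<Rightarrow> real \<Rightarrow> real" where
  "gauss mu s2 x = normal_density mu (sqrt s2) x"

definition gZ :: "nat \<Rightarrow> real \<Rightarrow> real \<Rightarrow> real" where
  "gZ k mu s2 = (LINT x|lborel. indicator {0..} x * x ^ (2*k) * gauss mu s2 x)"

definition gdens :: "nat \<Rightarrow> real \<Rightarrow> real \<Rightarrow> real \<Rightarrow> real" where
  "gdens k mu s2 x = indicator {0..} x * x ^ (2*k) * gauss mu s2 x / gZ k mu s2"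

(* mode of g (explicit argmax) *)
definition mu_hat :: "nat \<Rightarrow> real \<Rightarrow> real \<Rightarrow> real" where
  "mu_hat k mu s2 = (mu / s2 + sqrt (mu^2 / s2^2 + 8 * real k / s2)) / (2 / s2)"

(* -(d^2/dx^2 log g at mu_hat)^(-1) *)
definition s2_hat :: "nat \<Rightarrow> real \<Rightarrow> real \<Rightarrow> real" where
  "s2_hat k mu s2 = inverse (2 * real k / (mu_hat k mu s2)^2 + 1 / s2)"

definition dTV :: "(real \<Rightarrow> real) \<Rightarrow> (real \<Rightarrow> real) \<Rightarrow> real" where
  "dTV p q = (LINT x|lborel. max 0 (p x - q x))"

(* V(x;k,m), real-valued for x > 0; V = -infinity for x <= 0 *)
definition Vfun :: "nat \<Rightarrow> real \<Rightarrow> real \<Rightarrow> real" where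
  "Vfun k m x = 2 * real k * (ln (x/m) - (x/m - 1) + (1/2) * (x/m - 1)^2)"

(* e^{V(x;k,m)}, with the convention e^{-infinity} = 0 *)
definition expV :: "nat \<Rightarrow> real \<Rightarrow> real \<Rightarrow> real" where
  "expV k m x = (if x > 0 then exp (Vfun k m x) else 0)"

end

theory Submission
  imports Defs
begin

text \<open>Completing the square around the mode shows \<open>g = D e\<^sup>V f\<close> with \<open>f = f(\<cdot>; mu_hat, s2_hat)\<close>,
  \<open>V = V(\<cdot>; k, mu_hat)\<close> and a constant \<open>D\<close>; and \<open>e\<^sup>V \<ge> 1\<close> exactly to the right of the mode.
  If \<open>D \<le> 1\<close>, then \<open>(g - f)\<^sup>+ \<le> (e\<^sup>V - 1) f\<close> on \<open>[mu_hat, \<infinity>)\<close> and \<open>0\<close> elsewhere; if \<open>D > 1\<close>, both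
  being probability densities, \<open>d\<^sub>T\<^sub>V(g, f) = \<integral>(f - g)\<^sup>+ \<le> \<integral>\<^bsub>x \<le> mu_hat\<^esub> (1 - e\<^sup>V) f\<close>.
  Standardising, both one-sided integrals only depend on the relative width
  \<open>\<sigma> = sqrt s2_hat / mu_hat\<close> and increase with it, while \<open>\<sigma>\<^sup>2 \<le> 1/(2k)\<close>; at \<open>\<sigma>\<^sup>2 = 1/(2k)\<close> they are
  the two terms of the bound.\<close>

lemma gauss_eq_normal_density: "gauss u v = normal_density u (sqrt v)"
  by (simp add: fun_eq_iff gauss_def)

lemma gauss_eq_exp:
  assumes "v > 0"
  shows "gauss u v w = 1 / (sqrt (2 * pi * v) * exp ((w - u)\<^sup>2 / (2 * v)))"
  using assms by (simp add: gauss_def normal_density_def minus_divide_left[symmetric] exp_minus field_simps)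

lemma normal_density_affine:
  assumes "t > 0"
  shows "normal_density m t (m + t * z) = std_normal_density z / t"
proof -
  have "sqrt (2 * pi * t\<^sup>2) = sqrt (2 * pi) * t"
    using assms by (simp add: real_sqrt_mult)
  moreover have "(m + t * z - m)\<^sup>2 / (2 * t\<^sup>2) = z\<^sup>2 / 2"
    using assms by (simp add: power_mult_distrib field_simps)
  ultimately show ?thesis
    unfolding normal_density_def by (simp add: field_simps)
qed

lemma integral_normal_density_standardize:
  fixes H :: "real \<Rightarrow> real"
  assumes "t > 0"
  shows "(\<integral>x. H ((x - m) / t) * normal_density m t x \<partial>lborel) = (\<integral>z. H z * std_normal_density z \<partial>lborel)"
proof -
  have "(\<integral>x. H ((x - m) / t) * normal_density m t x \<partial>lborel)
      = \<bar>t\<bar> *\<^sub>R (\<integral>z. H ((m + t * z - m) / t) * normal_density m t (m + t * z) \<partial>lborel)"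
    using assms by (intro lborel_integral_real_affine) simp
  also have "\<dots> = (\<integral>z. H z * std_normal_density z \<partial>lborel)"
    using assms by (simp add: normal_density_affine)
  finally show ?thesis .
qed

lemma integrable_normal_density_standardize:
  fixes H :: "real \<Rightarrow> real"
  assumes "t > 0"
  shows "integrable lborel (\<lambda>x. H ((x - m) / t) * normal_density m t x)
    \<longleftrightarrow> integrable lborel (\<lambda>z. H z * std_normal_density z)"
proof -
  have "integrable lborel (\<lambda>x. H ((x - m) / t) * normal_density m t x) \<longleftrightarrow>
     integrable lborel (\<lambda>z. H ((m + t * z - m) / t) * normal_density m t (m + t * z))"
    using assms by (intro lborel_integrable_real_affine_iff[symmetric]) simp
  also have "\<dots> \<longleftrightarrow> integrable lborel (\<lambda>z. (1 / t) * (H z * std_normal_density z))"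
    using assms by (simp add: normal_density_affine)
  finally show ?thesis
    using assms by (simp add: divide_inverse integrable_mult_left_iff)
qed

lemma dTV_commute:
  assumes "integrable lborel p" "integrable lborel q"
    and "(\<integral>x. p x \<partial>lborel) = (\<integral>x. q x \<partial>lborel)"
  shows "dTV p q = dTV q p"
proof -
  have "dTV p q = (\<integral>x. max 0 (q x - p x) + (p x - q x) \<partial>lborel)"
    unfolding dTV_def by (intro Bochner_Integration.integral_cong) auto
  also have "\<dots> = dTV q p"
    using assms unfolding dTV_def by simp
  finally show ?thesis .
qed

lemma dTV_le_excess_above:
  fixes p q e :: "real \<Rightarrow> real"
  assumes p: "\<And>x. p x = D * (e x * q x)" and "D \<le> 1"
    and q_nonneg: "\<And>x. 0 \<le> q x" and e_nonneg: "\<And>x. 0 \<le> e x"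
    and e_above: "\<And>x. c \<le> x \<Longrightarrow> 1 \<le> e x" and e_below: "\<And>x. x \<le> c \<Longrightarrow> e x \<le> 1"
    and "set_integrable lborel {c..} (\<lambda>x. (e x - 1) * q x)"
  shows "dTV p q \<le> (LINT x:{c..}|lborel. (e x - 1) * q x)"
  unfolding dTV_def set_lebesgue_integral_def
proof (intro integral_mono_AE' AE_I2)
  show "integrable lborel (\<lambda>x. indicator {c..} x *\<^sub>R ((e x - 1) * q x))"
    using assms(7) unfolding set_integrable_def .
next
  fix x
  have De: "D * e x \<le> e x"
    using mult_right_mono[OF \<open>D \<le> 1\<close> e_nonneg[of x]] by simp
  show "0 \<le> indicator {c..} x *\<^sub>R ((e x - 1) * q x)"
    using e_above[of x] q_nonneg[of x] by (simp add: indicator_def)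
  show "max 0 (p x - q x) \<le> indicator {c..} x *\<^sub>R ((e x - 1) * q x)"
  proof (cases "c \<le> x")
    case True
    have "D * (e x * q x) \<le> e x * q x"
      using mult_right_mono[OF De q_nonneg[of x]] by (simp add: mult.assoc)
    moreover have "0 \<le> (e x - 1) * q x"
      using e_above[OF True] q_nonneg[of x] by simp
    ultimately show ?thesis
      using True by (simp add: p left_diff_distrib)
  next
    case False
    then have "D * e x \<le> 1"
      using De e_below[of x] by simp
    then have "D * (e x * q x) \<le> q x"
      using mult_right_mono[OF _ q_nonneg[of x]] by (fastforce simp: mult.assoc)
    then show ?thesis
      using False by (simp add: p)
  qed
qed

lemma integrable_crossing_times:
  fixes q e :: "real \<Rightarrow> real"
  assumes "\<And>x. c \<le> x \<Longrightarrow> 1 \<le> e x" "\<And>x. x \<le> c \<Longrightarrow> e x \<le> 1"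
    and "set_integrable lborel {c..} (\<lambda>x. (e x - 1) * q x)"
    and "set_integrable lborel {..c} (\<lambda>x. (1 - e x) * q x)"
    and "integrable lborel q"
  shows "integrable lborel (\<lambda>x. e x * q x)"
proof -
  have "e x * q x = indicator {c..} x * ((e x - 1) * q x) - indicator {..c} x * ((1 - e x) * q x) + q x"
    for x
    using assms(1,2)[of c] by (cases x c rule: linorder_cases) (auto simp: algebra_simps)
  then show ?thesis
    using assms(3-5) unfolding set_integrable_def by simp
qed

lemma dTV_le_deficit_below:
  fixes p q e :: "real \<Rightarrow> real"
  assumes p: "\<And>x. p x = D * (e x * q x)" and "1 \<le> D"
    and q_nonneg: "\<And>x. 0 \<le> q x" and e_nonneg: "\<And>x. 0 \<le> e x"
    and e_above: "\<And>x. c \<le> x \<Longrightarrow> 1 \<le> e x" and e_below: "\<And>x. x \<le> c \<Longrightarrow> e x \<le> 1"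
    and excess: "set_integrable lborel {c..} (\<lambda>x. (e x - 1) * q x)"
    and deficit: "set_integrable lborel {..c} (\<lambda>x. (1 - e x) * q x)"
    and "integrable lborel q" and "(\<integral>x. p x \<partial>lborel) = (\<integral>x. q x \<partial>lborel)"
  shows "dTV p q \<le> (LINT x:{..c}|lborel. (1 - e x) * q x)"
proof -
  have "integrable lborel (\<lambda>x. e x * q x)"
    using integrable_crossing_times[OF e_above e_below excess deficit \<open>integrable lborel q\<close>] .
  moreover have "p = (\<lambda>x. D * (e x * q x))"
    using p by auto
  ultimately have "dTV p q = dTV q p"
    using assms(9,10) by (intro dTV_commute) simp_all
  also have "\<dots> \<le> (LINT x:{..c}|lborel. (1 - e x) * q x)"
    unfolding dTV_def set_lebesgue_integral_def
  proof (intro integral_mono_AE' AE_I2)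
    show "integrable lborel (\<lambda>x. indicator {..c} x *\<^sub>R ((1 - e x) * q x))"
      using deficit unfolding set_integrable_def .
  next
    fix x
    have De: "e x \<le> D * e x"
      using mult_right_mono[OF \<open>1 \<le> D\<close> e_nonneg[of x]] by simp
    show "0 \<le> indicator {..c} x *\<^sub>R ((1 - e x) * q x)"
      using e_below[of x] q_nonneg[of x] by (simp add: indicator_def)
    show "max 0 (q x - p x) \<le> indicator {..c} x *\<^sub>R ((1 - e x) * q x)"
    proof (cases "x \<le> c")
      case True
      have "e x * q x \<le> D * (e x * q x)"
        using mult_right_mono[OF De q_nonneg[of x]] by (simp add: mult.assoc)
      moreover have "0 \<le> (1 - e x) * q x"
        using e_below[OF True] q_nonneg[of x] by simp
      ultimately show ?thesis
        using True by (simp add: p left_diff_distrib)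
    next
      case False
      then have "1 \<le> D * e x"
        using De e_above[of x] by linarith
      then have "q x \<le> D * (e x * q x)"
        using mult_right_mono[OF _ q_nonneg[of x]] by (fastforce simp: mult.assoc)
      then show ?thesis
        using False by (simp add: p)
    qed
  qed
  finally show ?thesis .
qed

lemma dTV_le_max_excess_deficit:
  fixes p q e :: "real \<Rightarrow> real"
  assumes p: "\<And>x. p x = D * (e x * q x)"
    and q_nonneg: "\<And>x. 0 \<le> q x" and e_nonneg: "\<And>x. 0 \<le> e x"
    and e_above: "\<And>x. c \<le> x \<Longrightarrow> 1 \<le> e x" and e_below: "\<And>x. x \<le> c \<Longrightarrow> e x \<le> 1"
    and excess: "set_integrable lborel {c..} (\<lambda>x. (e x - 1) * q x)"
    and deficit: "set_integrable lborel {..c} (\<lambda>x. (1 - e x) * q x)"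
    and "integrable lborel q" and normalized: "1 < D \<Longrightarrow> (\<integral>x. p x \<partial>lborel) = (\<integral>x. q x \<partial>lborel)"
  shows "dTV p q \<le> max (LINT x:{c..}|lborel. (e x - 1) * q x) (LINT x:{..c}|lborel. (1 - e x) * q x)"
proof (cases "D \<le> 1")
  case True
  then show ?thesis
    using dTV_le_excess_above[OF p True q_nonneg e_nonneg e_above e_below excess] by linarith
next
  case False
  then show ?thesis
    using dTV_le_deficit_below[OF p _ q_nonneg e_nonneg e_above e_below excess deficit
        \<open>integrable lborel q\<close> normalized]
    by linarith
qed

lemma Vfun_mono:
  assumes "0 < x" "x \<le> y"
  shows "Vfun k 1 x \<le> Vfun k 1 y"
proof (rule DERIV_nonneg_imp_nondecreasing[OF assms(2)])
  fix t assume "x \<le> t" "t \<le> y"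
  then have "t > 0" using assms by simp
  then have "((\<lambda>t. Vfun k 1 t) has_real_derivative 2 * real k * ((t - 1)\<^sup>2 / t)) (at t)"
    unfolding Vfun_def
    by (auto intro!: derivative_eq_intros simp: field_simps power2_eq_square)
  then show "\<exists>d. ((\<lambda>t. Vfun k 1 t) has_real_derivative d) (at t) \<and> 0 \<le> d"
    using \<open>t > 0\<close> by auto
qed

lemma expV_mono: "x \<le> y \<Longrightarrow> expV k 1 x \<le> expV k 1 y"
  unfolding expV_def using Vfun_mono[of x y k] by auto

lemma expV_nonneg: "0 \<le> expV k m x"
  unfolding expV_def by auto

lemma expV_1_1: "expV k 1 1 = 1"
  unfolding expV_def Vfun_def by simp

lemma expV_rescale: "m > 0 \<Longrightarrow> expV k m x = expV k 1 (x / m)"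
  unfolding expV_def Vfun_def by (simp add: zero_less_divide_iff)

lemma one_le_expV:
  assumes "m > 0" "m \<le> x"
  shows "1 \<le> expV k m x"
  using assms expV_mono[of 1 "x / m" k] expV_rescale[OF assms(1)] by (simp add: expV_1_1)

lemma expV_le_one:
  assumes "m > 0" "x \<le> m"
  shows "expV k m x \<le> 1"
  using assms expV_mono[of "x / m" 1 k] expV_rescale[OF assms(1)] by (simp add: expV_1_1)

lemma borel_measurable_expV [measurable]: "expV k m \<in> borel_measurable borel"
  unfolding expV_def[abs_def] Vfun_def by measurable

text \<open>In the coordinate \<open>z = (x - m) / sqrt S\<close> one has \<open>x / m = 1 + \<sigma> z\<close> with the relative
  width \<open>\<sigma> = sqrt S / m\<close>; these are the integrands of the two one-sided bounds in that coordinate.\<close>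
definition excess_above :: "nat \<Rightarrow> real \<Rightarrow> real \<Rightarrow> real" where
  "excess_above k \<sigma> z = indicator {0..} z * (expV k 1 (1 + \<sigma> * z) - 1)"

definition deficit_below :: "nat \<Rightarrow> real \<Rightarrow> real \<Rightarrow> real" where
  "deficit_below k \<sigma> z = indicator {..0} z * (1 - expV k 1 (1 + \<sigma> * z))"

lemma borel_measurable_excess_above [measurable]: "excess_above k \<sigma> \<in> borel_measurable borel"
  unfolding excess_above_def[abs_def] by measurable

lemma borel_measurable_deficit_below [measurable]: "deficit_below k \<sigma> \<in> borel_measurable borel"
  unfolding deficit_below_def[abs_def] by measurable

lemma excess_above_nonneg: "0 \<le> \<sigma> \<Longrightarrow> 0 \<le> excess_above k \<sigma> z"
  unfolding excess_above_def by (simp add: indicator_def one_le_expV[of 1])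

lemma deficit_below_nonneg: "0 \<le> \<sigma> \<Longrightarrow> 0 \<le> deficit_below k \<sigma> z"
  unfolding deficit_below_def by (simp add: indicator_def expV_le_one[of 1] mult_nonneg_nonpos)

lemma deficit_below_le_one: "deficit_below k \<sigma> z \<le> 1"
  unfolding deficit_below_def by (simp add: indicator_def expV_nonneg)

lemma excess_above_mono:
  assumes "\<sigma> \<le> \<sigma>'"
  shows "excess_above k \<sigma> z \<le> excess_above k \<sigma>' z"
proof (cases "0 \<le> z")
  case True
  then have "expV k 1 (1 + \<sigma> * z) \<le> expV k 1 (1 + \<sigma>' * z)"
    using assms by (intro expV_mono) (simp add: mult_right_mono)
  then show ?thesis
    using True by (simp add: excess_above_def)
qed (simp add: excess_above_def)

lemma deficit_below_mono:
  assumes "\<sigma> \<le> \<sigma>'"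
  shows "deficit_below k \<sigma> z \<le> deficit_below k \<sigma>' z"
proof (cases "z \<le> 0")
  case True
  then have "expV k 1 (1 + \<sigma>' * z) \<le> expV k 1 (1 + \<sigma> * z)"
    using assms by (intro expV_mono) (simp add: mult_right_mono_neg)
  then show ?thesis
    using True by (simp add: deficit_below_def)
qed (simp add: deficit_below_def)

lemma expV_gauss_standardize:
  assumes "m > 0" "S > 0"
  defines "t \<equiv> sqrt S"
  shows "indicator {m..} x * ((expV k m x - 1) * gauss m S x)
           = excess_above k (t / m) ((x - m) / t) * normal_density m t x"
    and "indicator {..m} x * ((1 - expV k m x) * gauss m S x)
           = deficit_below k (t / m) ((x - m) / t) * normal_density m t x"
proof -
  have t: "t > 0" using assms by (simp add: t_def)
  then have "1 + t / m * ((x - m) / t) = x / m"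
    using assms by (simp add: field_simps)
  then have e: "expV k m x = expV k 1 (1 + t / m * ((x - m) / t))"
    using expV_rescale[OF \<open>m > 0\<close>] by simp
  have g: "gauss m S x = normal_density m t x"
    by (simp add: gauss_def t_def)
  have "indicator {0..} ((x - m) / t) = (indicator {m..} x :: real)"
    and "indicator {..0} ((x - m) / t) = (indicator {..m} x :: real)"
    using t by (auto simp: indicator_def divide_le_0_iff zero_le_divide_iff)
  then show "indicator {m..} x * ((expV k m x - 1) * gauss m S x)
           = excess_above k (t / m) ((x - m) / t) * normal_density m t x"
    and "indicator {..m} x * ((1 - expV k m x) * gauss m S x)
           = deficit_below k (t / m) ((x - m) / t) * normal_density m t x"
    unfolding excess_above_def deficit_below_def e g by simp_all
qed

lemma excess_above_standardize:
  assumes "m > 0" "S > 0"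
  shows "(LINT x:{m..}|lborel. (expV k m x - 1) * gauss m S x)
           = (\<integral>z. excess_above k (sqrt S / m) z * std_normal_density z \<partial>lborel)"
    and "set_integrable lborel {m..} (\<lambda>x. (expV k m x - 1) * gauss m S x)
           \<longleftrightarrow> integrable lborel (\<lambda>z. excess_above k (sqrt S / m) z * std_normal_density z)"
  using assms integral_normal_density_standardize integrable_normal_density_standardize
  by (simp_all add: set_lebesgue_integral_def set_integrable_def expV_gauss_standardize(1))

lemma deficit_below_standardize:
  assumes "m > 0" "S > 0"
  shows "(LINT x:{..m}|lborel. (1 - expV k m x) * gauss m S x)
           = (\<integral>z. deficit_below k (sqrt S / m) z * std_normal_density z \<partial>lborel)"
    and "set_integrable lborel {..m} (\<lambda>x. (1 - expV k m x) * gauss m S x)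
           \<longleftrightarrow> integrable lborel (\<lambda>z. deficit_below k (sqrt S / m) z * std_normal_density z)"
  using assms integral_normal_density_standardize integrable_normal_density_standardize
  by (simp_all add: set_lebesgue_integral_def set_integrable_def expV_gauss_standardize(2))

lemma integrable_deficit_below:
  assumes "0 \<le> \<sigma>"
  shows "integrable lborel (\<lambda>z. deficit_below k \<sigma> z * std_normal_density z)"
proof (rule Bochner_Integration.integrable_bound[OF integrable_normal_density[of 1 0]])
  have "norm (deficit_below k \<sigma> z * std_normal_density z) \<le> norm (std_normal_density z)" for z
    using deficit_below_nonneg[OF assms] deficit_below_le_one by (auto intro!: mult_left_le_one_le)
  then show "AE z in lborel. norm (deficit_below k \<sigma> z * std_normal_density z) \<le> norm (normal_density 0 1 z)"
    by simp
qed measurable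

lemma integrable_exp_times_power:
  fixes l :: real
  assumes "l > 0"
  shows "integrable lborel (\<lambda>y. indicator {0..} y * (exp (- l * y) * y ^ n))"
proof -
  have "integrable lborel (\<lambda>y. erlang_density 0 l y * y ^ n)"
  proof (rule integrableI_nonneg)
    show "AE y in lborel. 0 \<le> erlang_density 0 l y * y ^ n"
      using assms by (auto simp: erlang_density_def)
    show "(\<integral>\<^sup>+ y. ennreal (erlang_density 0 l y * y ^ n) \<partial>lborel) < \<infinity>"
      using assms by (simp add: nn_integral_erlang_ith_moment)
  qed measurable
  then have "integrable lborel (\<lambda>y. (1 / l) * (erlang_density 0 l y * y ^ n))"
    by simp
  moreover have "(\<lambda>y. (1 / l) * (erlang_density 0 l y * y ^ n))
      = (\<lambda>y. indicator {0..} y * (exp (- l * y) * y ^ n))"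
    using assms by (auto simp: erlang_density_def indicator_def)
  ultimately show ?thesis by simp
qed

text \<open>At variance \<open>1/(2k)\<close> the quadratic terms of \<open>V\<close> and of the Gaussian exponent cancel,
  leaving a Gamma-type integrand.\<close>
lemma expV_times_gauss_critical:
  assumes "k \<ge> 1" "y > 0"
  shows "expV k 1 y * gauss 1 (1 / (2 * real k)) y
       = exp (2 * real k) / sqrt (2 * pi * (1 / (2 * real k))) * (exp (- (2 * real k) * y) * y ^ (2 * k))"
proof -
  have k: "real k > 0" using assms(1) by simp
  have "y ^ (2 * k) = exp (real (2 * k) * ln y)"
    using assms(2) by (metis exp_ln_iff exp_of_nat_mult)
  moreover have "Vfun k 1 y - (y - 1)\<^sup>2 / (2 * (1 / (2 * real k)))
      = 2 * real k + (- (2 * real k) * y + real (2 * k) * ln y)"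
    using k unfolding Vfun_def by (simp add: field_simps power2_eq_square)
  ultimately show ?thesis
    using k assms(2)
    by (simp add: expV_def gauss_def normal_density_def exp_add[symmetric] exp_diff[symmetric])
qed

lemma integrable_excess_above_critical:
  assumes "k \<ge> 1"
  shows "integrable lborel (\<lambda>z. excess_above k (sqrt (1 / (2 * real k))) z * std_normal_density z)"
proof -
  let ?g = "gauss 1 (1 / (2 * real k))"
  let ?C = "exp (2 * real k) / sqrt (2 * pi * (1 / (2 * real k)))"
  let ?h = "\<lambda>y. indicator {0..} y * (exp (- (2 * real k) * y) * y ^ (2 * k))"
  have "integrable lborel (\<lambda>y. indicator {1..} y * (?C * ?h y) - indicator {1..} y * ?g y)"
  proof (intro Bochner_Integration.integrable_diff)
    have "integrable lborel (\<lambda>y. ?C * ?h y)"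
      using assms integrable_exp_times_power[of "2 * real k" "2 * k"] by simp
    from integrable_mult_indicator[OF _ this, of "{1..}"]
    show "integrable lborel (\<lambda>y. indicator {1..} y * (?C * ?h y))"
      by simp
    from integrable_mult_indicator[OF _ integrable_normal_density, of "{1..}"]
    show "integrable lborel (\<lambda>y. indicator {1..} y * ?g y)"
      using assms unfolding gauss_def by simp
  qed
  moreover have "indicator {1..} y * (?C * ?h y) - indicator {1..} y * ?g y
      = indicator {1..} y * ((expV k 1 y - 1) * ?g y)" for y
    using expV_times_gauss_critical[OF assms, of y]
    by (cases "1 \<le> y") (auto simp: indicator_def algebra_simps)
  ultimately have "set_integrable lborel {1..} (\<lambda>y. (expV k 1 y - 1) * ?g y)"
    unfolding set_integrable_def by simp
  then show ?thesis
    using excess_above_standardize(2)[of 1 "1 / (2 * real k)" k] assms by simp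
qed

lemma integrable_excess_above:
  assumes "k \<ge> 1" "0 \<le> \<sigma>" "\<sigma> \<le> sqrt (1 / (2 * real k))"
  shows "integrable lborel (\<lambda>z. excess_above k \<sigma> z * std_normal_density z)"
proof (rule Bochner_Integration.integrable_bound[OF integrable_excess_above_critical[OF assms(1)]])
  have "norm (excess_above k \<sigma> z * std_normal_density z)
      \<le> norm (excess_above k (sqrt (1 / (2 * real k))) z * std_normal_density z)" for z
    using excess_above_nonneg[OF assms(2)] excess_above_mono[OF assms(3)] assms(2,3)
      excess_above_nonneg[of "sqrt (1 / (2 * real k))"]
    by (auto intro!: mult_right_mono)
  then show "AE z in lborel. norm (excess_above k \<sigma> z * std_normal_density z)
      \<le> norm (excess_above k (sqrt (1 / (2 * real k))) z * std_normal_density z)"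
    by simp
qed measurable

lemma set_integrable_expV_excess:
  assumes "k \<ge> 1" "m > 0" "S > 0" "sqrt S / m \<le> sqrt (1 / (2 * real k))"
  shows "set_integrable lborel {m..} (\<lambda>x. (expV k m x - 1) * gauss m S x)"
  using excess_above_standardize(2)[OF assms(2,3)] integrable_excess_above[OF assms(1) _ assms(4)] assms(2,3)
  by simp

lemma set_integrable_expV_deficit:
  assumes "m > 0" "S > 0"
  shows "set_integrable lborel {..m} (\<lambda>x. (1 - expV k m x) * gauss m S x)"
  using deficit_below_standardize(2)[OF assms] integrable_deficit_below assms by simp

lemma set_integral_expV_excess_le:
  assumes "k \<ge> 1" "m > 0" "S > 0" and width: "sqrt S / m \<le> sqrt (1 / (2 * real k))"
  shows "(LINT x:{m..}|lborel. (expV k m x - 1) * gauss m S x)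
       \<le> (LINT x:{1..}|lborel. (expV k 1 x - 1) * gauss 1 (1 / (2 * real k)) x)"
proof -
  have "(\<integral>z. excess_above k (sqrt S / m) z * std_normal_density z \<partial>lborel)
      \<le> (\<integral>z. excess_above k (sqrt (1 / (2 * real k))) z * std_normal_density z \<partial>lborel)"
    using assms integrable_excess_above[OF assms(1)]
    by (intro integral_mono) (auto intro!: mult_right_mono excess_above_mono)
  then show ?thesis
    using assms(1) by (simp add: excess_above_standardize(1)[OF assms(2,3)]
      excess_above_standardize(1)[of 1 "1 / (2 * real k)"])
qed

lemma set_integral_expV_deficit_le:
  assumes "k \<ge> 1" "m > 0" "S > 0" and width: "sqrt S / m \<le> sqrt (1 / (2 * real k))"
  shows "(LINT x:{..m}|lborel. (1 - expV k m x) * gauss m S x)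
       \<le> (LINT x:{..1}|lborel. (1 - expV k 1 x) * gauss 1 (1 / (2 * real k)) x)"
proof -
  have "(\<integral>z. deficit_below k (sqrt S / m) z * std_normal_density z \<partial>lborel)
      \<le> (\<integral>z. deficit_below k (sqrt (1 / (2 * real k))) z * std_normal_density z \<partial>lborel)"
    using assms integrable_deficit_below
    by (intro integral_mono) (auto intro!: mult_right_mono deficit_below_mono)
  then show ?thesis
    using assms(1) by (simp add: deficit_below_standardize(1)[OF assms(2,3)]
      deficit_below_standardize(1)[of 1 "1 / (2 * real k)"])
qed

lemma mu_hat_eq:
  assumes "s2 > 0"
  shows "mu_hat k mu s2 = (mu + sqrt (mu\<^sup>2 + 8 * real k * s2)) / 2"
proof -
  have "mu\<^sup>2 / s2\<^sup>2 + 8 * real k / s2 = (mu\<^sup>2 + 8 * real k * s2) / s2\<^sup>2"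
    using assms by (simp add: field_simps power2_eq_square)
  then have "sqrt (mu\<^sup>2 / s2\<^sup>2 + 8 * real k / s2) = sqrt (mu\<^sup>2 + 8 * real k * s2) / s2"
    using assms by (simp add: real_sqrt_divide)
  then show ?thesis
    unfolding mu_hat_def using assms by (simp add: field_simps)
qed

lemma mu_hat_pos:
  assumes "s2 > 0" "k \<ge> 1"
  shows "mu_hat k mu s2 > 0"
proof -
  have "sqrt (mu\<^sup>2) < sqrt (mu\<^sup>2 + 8 * real k * s2)"
    using assms by (intro real_sqrt_less_mono) simp
  then have "0 < mu + sqrt (mu\<^sup>2 + 8 * real k * s2)"
    using abs_ge_minus_self[of mu] by simp
  then show ?thesis
    using mu_hat_eq[OF assms(1), of k mu] by simp
qed

text \<open>The mode equation \<open>2k/x = (x - mu)/s2\<close> of \<open>g\<close>.\<close>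
lemma mu_hat_mode_equation:
  assumes "s2 > 0"
  shows "mu_hat k mu s2 * (mu_hat k mu s2 - mu) = 2 * real k * s2"
proof -
  have "(sqrt (mu\<^sup>2 + 8 * real k * s2))\<^sup>2 = mu\<^sup>2 + 8 * real k * s2"
    using assms by simp
  then show ?thesis
    unfolding mu_hat_eq[OF assms] by (simp add: field_simps power2_eq_square)
qed

lemma s2_hat_pos:
  assumes "s2 > 0" "k \<ge> 1"
  shows "s2_hat k mu s2 > 0"
  unfolding s2_hat_def using assms mu_hat_pos[OF assms, of mu]
  by (intro positive_imp_inverse_positive add_pos_pos divide_pos_pos) auto

lemma sqrt_s2_hat_div_mu_hat_le:
  assumes "s2 > 0" "k \<ge> 1"
  shows "sqrt (s2_hat k mu s2) / mu_hat k mu s2 \<le> sqrt (1 / (2 * real k))"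
proof -
  let ?m = "mu_hat k mu s2"
  have m: "?m > 0" using mu_hat_pos[OF assms] .
  have "?m\<^sup>2 * (2 * real k / ?m\<^sup>2 + 1 / s2) = 2 * real k + ?m\<^sup>2 / s2"
    using m by (simp add: field_simps)
  moreover have "s2_hat k mu s2 / ?m\<^sup>2 = 1 / (?m\<^sup>2 * (2 * real k / ?m\<^sup>2 + 1 / s2))"
    unfolding s2_hat_def by (simp add: divide_inverse mult.commute)
  ultimately have "s2_hat k mu s2 / ?m\<^sup>2 = 1 / (2 * real k + ?m\<^sup>2 / s2)"
    by simp
  also have "\<dots> \<le> 1 / (2 * real k)"
    using assms m by (intro divide_left_mono) (auto intro!: mult_pos_pos add_pos_nonneg)
  finally have "sqrt (s2_hat k mu s2 / ?m\<^sup>2) \<le> sqrt (1 / (2 * real k))"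
    by simp
  then show ?thesis
    using m by (simp add: real_sqrt_divide)
qed

lemma log_kernel_decomposition:
  fixes mu :: real
  assumes "s2 > 0" "k \<ge> 1" "x > 0"
  defines "m \<equiv> mu_hat k mu s2" and "S \<equiv> s2_hat k mu s2"
  shows "real (2 * k) * ln x - (x - mu)\<^sup>2 / (2 * s2)
       = real (2 * k) * ln m - (m - mu)\<^sup>2 / (2 * s2) + (Vfun k m x - (x - m)\<^sup>2 / (2 * S))"
proof -
  have m: "m > 0" unfolding m_def using mu_hat_pos[OF assms(1,2)] .
  have K: "real k = m * (m - mu) / (2 * s2)"
    using mu_hat_mode_equation[OF assms(1), of k mu] assms(1) unfolding m_def by (simp add: field_simps)
  have "Vfun k m x = real (2 * k) * ln x - real (2 * k) * ln m
      + 2 * real k * (- (x / m - 1) + 1 / 2 * (x / m - 1)\<^sup>2)"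
    using m assms(3) unfolding Vfun_def by (simp add: ln_div algebra_simps)
  moreover have "(x - m)\<^sup>2 / (2 * S) = (x - m)\<^sup>2 * (2 * real k / m\<^sup>2 + 1 / s2) / 2"
    unfolding S_def s2_hat_def m_def by (simp add: field_simps)
  moreover have "- (x - mu)\<^sup>2 / (2 * s2) = - (m - mu)\<^sup>2 / (2 * s2)
      + 2 * real k * (- (x / m - 1) + 1 / 2 * (x / m - 1)\<^sup>2)
      - (x - m)\<^sup>2 * (2 * real k / m\<^sup>2 + 1 / s2) / 2"
    unfolding K using m assms(1) by (simp add: field_simps power2_eq_square)
  ultimately show ?thesis
    by simp
qed

lemma power_times_gauss_factorization:
  fixes mu :: real
  assumes "s2 > 0" "k \<ge> 1" "x > 0"
  defines "m \<equiv> mu_hat k mu s2" and "S \<equiv> s2_hat k mu s2"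
  shows "x ^ (2 * k) * gauss mu s2 x * gauss m S m
       = m ^ (2 * k) * gauss mu s2 m * (exp (Vfun k m x) * gauss m S x)"
proof -
  have m: "m > 0" unfolding m_def using mu_hat_pos[OF assms(1,2)] .
  have S: "S > 0" unfolding S_def using s2_hat_pos[OF assms(1,2)] .
  have "y ^ (2 * k) = exp (real (2 * k) * ln y)" if "y > 0" for y :: real
    using that by (metis exp_ln_iff exp_of_nat_mult)
  then have "x ^ (2 * k) / exp ((x - mu)\<^sup>2 / (2 * s2))
      = m ^ (2 * k) / exp ((m - mu)\<^sup>2 / (2 * s2)) * (exp (Vfun k m x) / exp ((x - m)\<^sup>2 / (2 * S)))"
    using m assms(3) log_kernel_decomposition[OF assms(1-3), of mu, folded m_def S_def]
    by (simp only: exp_diff[symmetric] exp_add[symmetric])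
  then show ?thesis
    using m S assms(1) by (simp add: gauss_eq_exp field_simps)
qed

lemma gdens_eq_scaled_expV_gauss:
  fixes mu :: real
  assumes "s2 > 0" "k \<ge> 1"
  defines "m \<equiv> mu_hat k mu s2" and "S \<equiv> s2_hat k mu s2"
  shows "gdens k mu s2 x
       = m ^ (2 * k) * gauss mu s2 m / (gZ k mu s2 * gauss m S m) * (expV k m x * gauss m S x)"
proof (cases "x > 0")
  case True
  have "gauss m S m > 0"
    using s2_hat_pos[OF assms(1,2)] unfolding S_def by (simp add: gauss_def normal_density_pos)
  then have "x ^ (2 * k) * gauss mu s2 x
      = m ^ (2 * k) * gauss mu s2 m * (exp (Vfun k m x) * gauss m S x) / gauss m S m"
    using power_times_gauss_factorization[OF assms(1,2) True, of mu, folded m_def S_def]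
    by (simp add: field_simps)
  then show ?thesis
    using True unfolding gdens_def expV_def by (simp add: field_simps)
next
  case False
  then have "indicator {0..} x * x ^ (2 * k) = (0 :: real)"
    using assms(2) by (cases "x = 0") (auto simp: indicator_def)
  then show ?thesis
    using False unfolding gdens_def expV_def by simp
qed

lemma integral_gdens:
  assumes "gZ k mu s2 \<noteq> 0"
  shows "(\<integral>x. gdens k mu s2 x \<partial>lborel) = 1"
  using assms unfolding gdens_def by (simp add: gZ_def[symmetric])

theorem mainTheorem6:
  fixes k :: nat and mu s2 :: real
  assumes "k \<ge> 1" and "s2 > 0"
  shows "dTV (gdens k mu s2) (gauss (mu_hat k mu s2) (s2_hat k mu s2))
    \<le> max (LINT x:{1..}|lborel. (expV k 1 x - 1) * gauss 1 (1 / (2 * real k)) x)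
           (LINT x:{..1}|lborel. (1 - expV k 1 x) * gauss 1 (1 / (2 * real k)) x)"
proof -
  define m where "m = mu_hat k mu s2"
  define S where "S = s2_hat k mu s2"
  define D where "D = m ^ (2 * k) * gauss mu s2 m / (gZ k mu s2 * gauss m S m)"
  have m: "m > 0" and S: "S > 0" and width: "sqrt S / m \<le> sqrt (1 / (2 * real k))"
    using mu_hat_pos s2_hat_pos sqrt_s2_hat_div_mu_hat_le assms unfolding m_def S_def by blast+
  have p: "gdens k mu s2 x = D * (expV k m x * gauss m S x)" for x
    using gdens_eq_scaled_expV_gauss[OF assms(2,1)] unfolding D_def m_def S_def .
  have "(\<integral>x. gdens k mu s2 x \<partial>lborel) = (\<integral>x. gauss m S x \<partial>lborel)" if "1 < D"
  proof -
    have "gZ k mu s2 \<noteq> 0"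
      using that unfolding D_def by auto
    then show ?thesis
      using S by (simp add: integral_gdens gauss_eq_normal_density)
  qed
  then have "dTV (gdens k mu s2) (gauss m S)
      \<le> max (LINT x:{m..}|lborel. (expV k m x - 1) * gauss m S x)
             (LINT x:{..m}|lborel. (1 - expV k m x) * gauss m S x)"
    using expV_nonneg one_le_expV[OF m] expV_le_one[OF m] S
      set_integrable_expV_excess[OF assms(1) m S width] set_integrable_expV_deficit[OF m S]
    by (intro dTV_le_max_excess_deficit[OF p]) (simp_all add: gauss_eq_normal_density)
  also have "\<dots> \<le> max (LINT x:{1..}|lborel. (expV k 1 x - 1) * gauss 1 (1 / (2 * real k)) x)
                     (LINT x:{..1}|lborel. (1 - expV k 1 x) * gauss 1 (1 / (2 * real k)) x)"
    using set_integral_expV_excess_le[OF assms(1) m S width]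
      set_integral_expV_deficit_le[OF assms(1) m S width]
    by (rule max.mono)
  finally show ?thesis
    unfolding m_def S_def .
qed

end
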